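(* Let $\alpha\in[1,2]$, $n,m\ge1$, let $\omega=(\omega_1,\dots,\omega_n)$ be a weight vector with $\omega_j\ge0$, $\sum_j\omega_j=1$, and let $\rho_1,\dots,\rho_n$ be $m\times m$ density matrices. Then $$D_\alpha^\omega(\rho_1,\dots,\rho_n)\le H_\alpha(\omega),$$ where for $\alpha\neq1$, $H_\alpha(\omega)=\frac{1}{1-\alpha}\bigl(\sum_{j=1}^n\omega_j^\alpha-1\bigr)$ is the Tsallis entropy of $\omega$, and for $\alpha=1$, $H_1(\omega)=-\sum_j\omega_j\log\omega_j$ is its Shannon entropy (equivalently, $H_\alpha(\omega)=H_\alpha(\mathrm{diag}(\omega_1,\dots,\omega_n))$).
   Context: An $m\times m$ density matrix is a real symmetric positive semidefinite $m\times m$ matrix with trace $1$. For $\alpha\in(0,1)\cup(1,\infty)$, the quantum Tsallis entropy is $H_\alpha(\rho)=\frac{1}{1-\alpha}\bigl(\mathrm{tr}(\rho^\alpha)-1\bigr)$ ($\rho^\alpha$ via spectral decomposition); for $\alpha=1$, $H_1(\rho)=-\mathrm{tr}(\rho\log\rho)$ is the von Neumann entropy (with $0\log0=0$). The quantum Jensen–Tsallis divergence of density matrices $\rho_1,\dots,\rho_n$ with weights $\omega$ is $$D_\alpha^{\omega}(\rho_1,\dots,\rho_n)=H_\alpha\Bigl(\sum_{j=1}^n\omega_j\rho_j\Bigr)-\sum_{j=1}^n\omega_jH_\alpha(\rho_j).$$ *)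

theory Defs
  imports "HOL-Analysis.Analysis"
begin

definition mtrace :: "real^'m^'m \<Rightarrow> real" where
  "mtrace A = (\<Sum>i\<in>UNIV. A $ i $ i)"

definition diag_mat :: "real^'m \<Rightarrow> real^'m^'m" where
  "diag_mat d = (\<chi> i j. if i = j then d $ i else 0)"

definition density_matrix :: "real^'m^'m \<Rightarrow> bool" where
  "density_matrix A \<longleftrightarrow> transpose A = A \<and> (\<forall>x. 0 \<le> x \<bullet> (A *v x)) \<and> mtrace A = 1"

definition mat_fun :: "(real \<Rightarrow> real) \<Rightarrow> real^'m^'m \<Rightarrow> real^'m^'m" where
  "mat_fun f A = (let p = (SOME (U, d). orthogonal_matrix U \<and> A = U ** diag_mat d ** transpose U)
     in fst p ** diag_mat (\<chi> i. f (snd p $ i)) ** transpose (fst p))"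

definition xlogx :: "real \<Rightarrow> real" where
  "xlogx x = (if x = 0 then 0 else x * ln x)"

definition qtsallis :: "real \<Rightarrow> real^'m^'m \<Rightarrow> real" where
  "qtsallis \<alpha> \<rho> = (if \<alpha> = 1 then - mtrace (mat_fun xlogx \<rho>)
      else (mtrace (mat_fun (\<lambda>x. x powr \<alpha>) \<rho>) - 1) / (1 - \<alpha>))"

definition qjt_div :: "real \<Rightarrow> nat \<Rightarrow> (nat \<Rightarrow> real) \<Rightarrow> (nat \<Rightarrow> real^'m^'m) \<Rightarrow> real" where
  "qjt_div \<alpha> n w \<rho> = qtsallis \<alpha> (\<Sum>j<n. w j *\<^sub>R \<rho> j) - (\<Sum>j<n. w j * qtsallis \<alpha> (\<rho> j))"

definition ctsallis :: "real \<Rightarrow> nat \<Rightarrow> (nat \<Rightarrow> real) \<Rightarrow> real" where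
  "ctsallis \<alpha> n w = (if \<alpha> = 1 then - (\<Sum>j<n. xlogx (w j))
      else ((\<Sum>j<n. w j powr \<alpha>) - 1) / (1 - \<alpha>))"

end

theory Submission
  imports Defs
begin

text \<open>
  Let C = sum_j w_j rho_j = sum_k c_k u_k u_k^T and rho_j = sum_i s_ji v_ji v_ji^T be spectral
  decompositions. The array p_(j,i),k = w_j s_ji (u_k . v_ji)^2 / c_k is doubly substochastic:
  its columns sum to 1 because u_k^T C u_k = c_k, and its rows sum to at most 1 because the
  rank-one matrix w_j s_ji v_ji v_ji^T lies below C. Since sum_k p_(j,i),k c_k = w_j s_ji,
  Jensen's inequality gives sum_(j,i) f (w_j s_ji) <= sum_k f c_k = tr f(C) for every convex f
  on [0, oo) with f 0 = 0. For f x = x log x the left-hand side is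
  sum_j (w_j log w_j + w_j tr f(rho_j)), which is the claim for alpha = 1. For f x = x^alpha it
  is sum_j w_j^alpha tr(rho_j^alpha), and tr(rho_j^alpha) <= 1 together with w_j^alpha <= w_j
  turns this into the Tsallis bound.
\<close>

section \<open>Spectral theorem for real symmetric matrices\<close>

lemma symmetric_matrix_inner:
  fixes A :: "real^'n^'n"
  assumes "transpose A = A"
  shows "(A *v x) \<bullet> y = x \<bullet> (A *v y)"
  by (metis assms dot_lmul_matrix inner_commute transpose_matrix_vector)

lemma eq_0_if_quadratic_nonpos:
  fixes b c :: real
  assumes "\<And>t. 2 * t * b + t\<^sup>2 * c \<le> 0"
  shows "b = 0"
proof -
  define k where "k = \<bar>c\<bar> + 1"
  have k: "k > 0" "2 * k + c > 0" by (auto simp: k_def)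
  have "b\<^sup>2 * (2 * k + c) = k\<^sup>2 * (2 * (b / k) * b + (b / k)\<^sup>2 * c)"
    using k by (simp add: field_simps power2_eq_square)
  also have "\<dots> \<le> 0" using assms[of "b / k"] by (simp add: mult_nonneg_nonpos)
  finally show "b = 0" using k by (simp add: mult_le_0_iff)
qed

lemma quadratic_form_max_imp_orthogonal:
  fixes A :: "real^'n^'n"
  assumes sym: "transpose A = A" and W: "subspace W" and x: "x \<in> W" "norm x = 1"
    and max: "\<And>z. z \<in> W \<Longrightarrow> norm z = 1 \<Longrightarrow> z \<bullet> (A *v z) \<le> x \<bullet> (A *v x)"
    and y: "y \<in> W" "y \<bullet> x = 0"
  shows "y \<bullet> (A *v x) = 0"
proof (rule eq_0_if_quadratic_nonpos[where c = "y \<bullet> (A *v y) - (x \<bullet> (A *v x)) * (y \<bullet> y)"])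
  fix t :: real
  define z where "z = x + t *\<^sub>R y"
  have zz: "z \<bullet> z = 1 + t\<^sup>2 * (y \<bullet> y)"
  proof -
    have "x \<bullet> y = 0" "y \<bullet> x = 0" "x \<bullet> x = 1" using x y by (simp_all add: inner_commute norm_eq_1)
    then show ?thesis by (simp add: z_def inner_add_left inner_add_right power2_eq_square)
  qed
  then have zpos: "z \<bullet> z > 0"
    by (smt (verit) inner_ge_zero mult_nonneg_nonneg zero_le_power2)
  have "z \<in> W" using W x y by (simp add: z_def subspace_add subspace_scale)
  then have "(z /\<^sub>R norm z) \<bullet> (A *v (z /\<^sub>R norm z)) \<le> x \<bullet> (A *v x)"
    using zpos W by (intro max) (auto simp: subspace_scale)
  moreover have "(z /\<^sub>R norm z) \<bullet> (A *v (z /\<^sub>R norm z)) = z \<bullet> (A *v z) / (z \<bullet> z)"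
    by (simp add: matrix_vector_mult_scaleR power2_norm_eq_inner[symmetric] power2_eq_square
        divide_inverse inverse_mult_distrib)
  ultimately have "z \<bullet> (A *v z) \<le> (x \<bullet> (A *v x)) * (z \<bullet> z)"
    using zpos by (simp add: divide_le_eq)
  moreover have "z \<bullet> (A *v z) = x \<bullet> (A *v x) + 2 * t * (y \<bullet> (A *v x)) + t\<^sup>2 * (y \<bullet> (A *v y))"
  proof -
    have "x \<bullet> (A *v y) = y \<bullet> (A *v x)"
      using symmetric_matrix_inner[OF sym, of x y] by (simp add: inner_commute)
    moreover have "A *v z = A *v x + t *\<^sub>R (A *v y)"
      by (simp add: z_def matrix_vector_right_distrib matrix_vector_mult_scaleR)
    ultimately show ?thesis
      by (simp add: z_def inner_add_left inner_add_right algebra_simps power2_eq_square)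
  qed
  ultimately show "2 * t * (y \<bullet> (A *v x)) + t\<^sup>2 * (y \<bullet> (A *v y) - (x \<bullet> (A *v x)) * (y \<bullet> y)) \<le> 0"
    using zz by (simp add: algebra_simps)
qed

text \<open>A maximiser of the quadratic form on the unit sphere of the orthogonal complement of F
  is an eigenvector.\<close>

lemma symmetric_matrix_eigenvector_orthogonal:
  fixes A :: "real^'n^'n" and F :: "(real^'n) set"
  assumes sym: "transpose A = A" and F: "finite F" "card F < CARD('n)"
    and eig: "\<And>v. v \<in> F \<Longrightarrow> \<exists>\<mu>. A *v v = \<mu> *\<^sub>R v"
  obtains x \<mu> where "norm x = 1" "\<forall>v\<in>F. orthogonal v x" "A *v x = \<mu> *\<^sub>R x"
proof -
  define W where "W = {x. \<forall>v\<in>F. orthogonal v x}"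
  have W: "subspace W" unfolding W_def by (rule subspace_orthogonal_to_vectors)
  have "dim F < DIM(real^'n)" using dim_le_card'[OF F(1)] F(2) by simp
  then obtain x0 where x0: "x0 \<noteq> 0" "\<And>y. y \<in> span F \<Longrightarrow> orthogonal x0 y"
    using orthogonal_to_subspace_exists by blast
  then have "x0 \<in> W" unfolding W_def using span_base orthogonal_commute by blast
  then have "x0 /\<^sub>R norm x0 \<in> W \<inter> sphere 0 1" using W x0(1) by (simp add: subspace_scale)
  then have "W \<inter> sphere 0 1 \<noteq> {}" by blast
  moreover have "compact (W \<inter> sphere 0 1)"
    using W by (intro closed_Int_compact closed_subspace compact_sphere)
  moreover have "continuous_on (W \<inter> sphere 0 1) (\<lambda>x. x \<bullet> (A *v x))"
    by (intro continuous_intros linear_continuous_on matrix_vector_mul_linear)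
  ultimately obtain x where "x \<in> W \<inter> sphere 0 1"
    and "\<forall>z\<in>W \<inter> sphere 0 1. z \<bullet> (A *v z) \<le> x \<bullet> (A *v x)"
    using continuous_attains_sup by blast
  then have x: "x \<in> W" "norm x = 1"
    and max: "\<And>z. z \<in> W \<Longrightarrow> norm z = 1 \<Longrightarrow> z \<bullet> (A *v z) \<le> x \<bullet> (A *v x)"
    by auto
  define l where "l = x \<bullet> (A *v x)"
  define y where "y = A *v x - l *\<^sub>R x"
  have "A *v x \<in> W"
  proof -
    have "orthogonal v (A *v x)" if "v \<in> F" for v
    proof -
      obtain \<mu> where "A *v v = \<mu> *\<^sub>R v" using eig \<open>v \<in> F\<close> by blast
      then show ?thesis
        using x(1) \<open>v \<in> F\<close> symmetric_matrix_inner[OF sym, of v x] by (simp add: W_def orthogonal_def)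
    qed
    then show ?thesis by (simp add: W_def)
  qed
  then have "y \<in> W" using W x(1) by (simp add: y_def subspace_diff subspace_scale)
  moreover have "y \<bullet> x = 0"
  proof -
    have "y \<bullet> x = (A *v x) \<bullet> x - l * (x \<bullet> x)" by (simp add: y_def inner_diff_left)
    also have "(A *v x) \<bullet> x = l" by (simp add: l_def inner_commute)
    finally show ?thesis using x(2) by (simp add: norm_eq_1)
  qed
  ultimately have "y \<bullet> (A *v x) = 0"
    using quadratic_form_max_imp_orthogonal[OF sym W x max] by blast
  moreover have "y \<bullet> y = y \<bullet> (A *v x) - l * (y \<bullet> x)"
    by (metis inner_diff_right inner_scaleR_right y_def)
  ultimately have "A *v x = l *\<^sub>R x" using \<open>y \<bullet> x = 0\<close> by (simp add: y_def)
  moreover have "\<forall>v\<in>F. orthogonal v x" using x(1) by (simp add: W_def)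
  ultimately show thesis using that x(2) by blast
qed

lemma orthonormal_eigenvectors_exist:
  fixes A :: "real^'n^'n"
  assumes sym: "transpose A = A" and "finite S"
  shows "\<exists>v::'n \<Rightarrow> real^'n. (\<forall>i\<in>S. norm (v i) = 1 \<and> (\<exists>\<mu>. A *v v i = \<mu> *\<^sub>R v i)) \<and>
            (\<forall>i\<in>S. \<forall>j\<in>S. i \<noteq> j \<longrightarrow> orthogonal (v i) (v j))"
  using \<open>finite S\<close>
proof (induction S rule: finite_induct)
  case empty
  show ?case by simp
next
  case (insert a S)
  from insert.IH obtain v where v_unit: "\<forall>i\<in>S. norm (v i) = 1 \<and> (\<exists>\<mu>. A *v v i = \<mu> *\<^sub>R v i)"
    and v_orth: "\<forall>i\<in>S. \<forall>j\<in>S. i \<noteq> j \<longrightarrow> orthogonal (v i) (v j)"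
    by (elim exE conjE)
  have "card S < CARD('n)" using insert(2) by (intro psubset_card_mono) auto
  then have card: "card (v ` S) < CARD('n)" using card_image_le[OF insert(1), of v] by linarith
  have eig: "\<exists>\<mu>. A *v u = \<mu> *\<^sub>R u" if "u \<in> v ` S" for u using that v_unit by blast
  obtain x \<mu> where x: "norm x = 1" "\<forall>u\<in>v ` S. orthogonal u x" "A *v x = \<mu> *\<^sub>R x"
    by (rule symmetric_matrix_eigenvector_orthogonal[OF sym finite_imageI[OF insert(1)] card eig])
  have "orthogonal x (v i)" if "i \<in> S" for i
    using x(2) that orthogonal_commute by blast
  then have "\<forall>i\<in>insert a S. \<forall>j\<in>insert a S. i \<noteq> j \<longrightarrow> orthogonal ((v(a := x)) i) ((v(a := x)) j)"
    using v_orth x(2) insert(2) by fastforce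
  moreover have "\<forall>i\<in>insert a S. norm ((v(a := x)) i) = 1 \<and> (\<exists>\<mu>. A *v (v(a := x)) i = \<mu> *\<^sub>R (v(a := x)) i)"
    using v_unit x by auto
  ultimately show ?case by blast
qed

theorem symmetric_matrix_diagonalizable:
  fixes A :: "real^'n^'n"
  assumes sym: "transpose A = A"
  obtains U d where "orthogonal_matrix U" "A = U ** diag_mat d ** transpose U"
proof -
  obtain v :: "'n \<Rightarrow> real^'n" where v_unit: "\<forall>i. norm (v i) = 1 \<and> (\<exists>\<mu>. A *v v i = \<mu> *\<^sub>R v i)"
    and v_orth: "\<forall>i j. i \<noteq> j \<longrightarrow> orthogonal (v i) (v j)"
    using orthonormal_eigenvectors_exist[OF sym finite_class.finite_UNIV] by auto
  obtain \<mu> where \<mu>: "\<And>i. A *v v i = \<mu> i *\<^sub>R v i" using v_unit by metis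
  define U :: "real^'n^'n" where "U = (\<chi> r c. v c $ r)"
  have column: "column c U = v c" for c by (simp add: U_def column_def vec_eq_iff)
  have U: "orthogonal_matrix U"
    unfolding orthogonal_matrix_orthonormal_columns column using v_unit v_orth by auto
  have "A ** U = U ** diag_mat (\<chi> i. \<mu> i)"
  proof -
    have "(A ** U) $ r $ c = \<mu> c * v c $ r" for r c
      using \<mu>[of c] by (simp add: matrix_matrix_mult_def matrix_vector_mult_def U_def vec_eq_iff)
    then show ?thesis
      by (simp add: vec_eq_iff matrix_matrix_mult_def diag_mat_def U_def if_distrib cong: if_cong)
  qed
  then have "A = U ** diag_mat (\<chi> i. \<mu> i) ** transpose U"
    using U by (metis matrix_mul_assoc matrix_mul_rid orthogonal_matrix_def)
  with U show thesis by (rule that)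
qed

section \<open>Diagonalised matrices and the trace functional calculus\<close>

lemma orthogonal_matrix_column_inner:
  fixes U :: "real^'n^'n"
  assumes "orthogonal_matrix U"
  shows "column i U \<bullet> column j U = (if i = j then 1 else 0)"
  using assms unfolding orthogonal_matrix_orthonormal_columns orthogonal_def
  by (simp add: norm_eq_1)

lemma diagonalized_mult_vector:
  fixes U :: "real^'n^'n"
  shows "(U ** diag_mat d ** transpose U) *v x = (\<Sum>k\<in>UNIV. (d $ k * (column k U \<bullet> x)) *\<^sub>R column k U)"
proof -
  have "transpose U *v x = (\<chi> k. column k U \<bullet> x)"
    by (simp add: vec_eq_iff vector_matrix_mult_def column_def inner_vec_def mult.commute)
  moreover have "diag_mat d *v y = (\<chi> k. d $ k * y $ k)" for y
  proof -
    have "(diag_mat d *v y) $ k = (\<Sum>j\<in>UNIV. if k = j then d $ k * y $ j else 0)" for k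
      unfolding matrix_vector_mult_def diag_mat_def vec_lambda_beta by (intro sum.cong) auto
    then show ?thesis by (simp add: vec_eq_iff)
  qed
  moreover have "(U ** diag_mat d ** transpose U) *v x = U *v (diag_mat d *v (transpose U *v x))"
    by (simp only: matrix_vector_mul_assoc[symmetric])
  ultimately have "(U ** diag_mat d ** transpose U) *v x = U *v (\<chi> k. d $ k * (column k U \<bullet> x))"
    by simp
  then show ?thesis by (simp add: matrix_mult_sum scalar_mult_eq_scaleR)
qed

lemma quadratic_form_diagonalized:
  fixes U :: "real^'n^'n"
  shows "x \<bullet> ((U ** diag_mat d ** transpose U) *v x) = (\<Sum>k\<in>UNIV. d $ k * (column k U \<bullet> x)\<^sup>2)"
  by (simp add: diagonalized_mult_vector inner_sum_right inner_commute[of x] power2_eq_square mult.assoc)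

lemma diagonalized_mult_column:
  fixes U :: "real^'n^'n"
  assumes "orthogonal_matrix U"
  shows "(U ** diag_mat d ** transpose U) *v column j U = d $ j *\<^sub>R column j U"
proof -
  have "(d $ k * (column k U \<bullet> column j U)) *\<^sub>R column k U = (if k = j then d $ j *\<^sub>R column j U else 0)"
    for k using orthogonal_matrix_column_inner[OF assms] by simp
  then show ?thesis by (simp add: diagonalized_mult_vector)
qed

lemma sum_column_inner_squared:
  fixes U :: "real^'n^'n"
  assumes "orthogonal_matrix U"
  shows "(\<Sum>k\<in>UNIV. (column k U \<bullet> x)\<^sup>2) = x \<bullet> x"
proof -
  have "diag_mat (\<chi> _. 1) = (mat 1 :: real^'n^'n)" by (simp add: diag_mat_def mat_def vec_eq_iff)
  then have "U ** diag_mat (\<chi> _. 1) ** transpose U = mat 1"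
    using assms by (simp add: orthogonal_matrix_def)
  then show ?thesis using quadratic_form_diagonalized[of x U "\<chi> _. 1"] by simp
qed

lemma mtrace_diagonalized:
  fixes U :: "real^'n^'n"
  assumes "orthogonal_matrix U"
  shows "mtrace (U ** diag_mat d ** transpose U) = (\<Sum>k\<in>UNIV. d $ k)"
proof -
  have "mtrace (U ** diag_mat d ** transpose U) = trace (U ** diag_mat d ** transpose U)"
    by (simp add: mtrace_def trace_def)
  also have "\<dots> = trace (transpose U ** (U ** diag_mat d))" by (rule trace_mul_sym)
  also have "transpose U ** (U ** diag_mat d) = diag_mat d"
    using assms by (simp add: matrix_mul_assoc orthogonal_matrix_def)
  finally show ?thesis by (simp add: trace_def diag_mat_def)
qed

lemma inner_column_sum_columns:
  fixes U :: "real^'n^'n"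
  assumes "orthogonal_matrix U"
  shows "column k U \<bullet> (\<Sum>j\<in>UNIV. a j *\<^sub>R column j U) = a k"
proof -
  have "a j * (column k U \<bullet> column j U) = (if k = j then a k else 0)" for j
    using orthogonal_matrix_column_inner[OF assms] by simp
  then show ?thesis by (simp add: inner_sum_right)
qed

lemma transpose_sum: "transpose (sum f I) = (\<Sum>i\<in>I. transpose (f i :: 'a::comm_monoid_add^'n^'m))"
  by (simp add: vec_eq_iff transpose_def sum_component)

lemma quadratic_form_scaleR_sum:
  fixes \<rho> :: "'j \<Rightarrow> real^'n^'n"
  shows "x \<bullet> ((\<Sum>j\<in>J. w j *\<^sub>R \<rho> j) *v x) = (\<Sum>j\<in>J. w j * (x \<bullet> (\<rho> j *v x)))"
  by (induction J rule: infinite_finite_induct)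
    (simp_all add: matrix_vector_mult_add_rdistrib scaleR_matrix_vector_assoc[symmetric] inner_add_right)

lemma symmetric_matrix_mtrace_mat_fun:
  fixes A :: "real^'n^'n"
  assumes "transpose A = A"
  obtains U d where "orthogonal_matrix U" "A = U ** diag_mat d ** transpose U"
    "\<And>f. mtrace (mat_fun f A) = (\<Sum>k\<in>UNIV. f (d $ k))"
proof -
  define P where "P = (\<lambda>(U, d). orthogonal_matrix U \<and> A = U ** diag_mat d ** transpose (U::real^'n^'n))"
  obtain U d where "orthogonal_matrix U" "A = U ** diag_mat d ** transpose U"
    by (rule symmetric_matrix_diagonalizable[OF assms])
  then have "P (U, d)" by (simp add: P_def)
  then have "P (SOME p. P p)" by (rule someI)
  moreover obtain U' d' where p: "(SOME p. P p) = (U', d')" by fastforce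
  ultimately have "orthogonal_matrix U'" "A = U' ** diag_mat d' ** transpose U'"
    by (simp_all add: P_def)
  moreover have "mtrace (mat_fun f A) = (\<Sum>k\<in>UNIV. f (d' $ k))" for f
    using p \<open>orthogonal_matrix U'\<close>
    by (simp add: mat_fun_def P_def[symmetric] Let_def mtrace_diagonalized)
  ultimately show thesis by (rule that)
qed

section \<open>Convex functions vanishing at zero\<close>

lemma convex_on_nonneg_extend:
  fixes f g :: "real \<Rightarrow> real"
  assumes g: "convex_on {0<..} g" and fg: "\<And>x. 0 < x \<Longrightarrow> f x = g x" and f0: "f 0 = 0"
    and scale: "\<And>t y. 0 \<le> t \<Longrightarrow> t \<le> 1 \<Longrightarrow> 0 < y \<Longrightarrow> f (t * y) \<le> t * f y"
  shows "convex_on {0..} f"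
proof (rule convex_onI)
  fix t x y :: real
  assume t: "0 < t" "t < 1" and xy: "x \<in> {0..}" "y \<in> {0..}"
  consider "x = 0" "y = 0" | "x = 0" "y > 0" | "x > 0" "y = 0" | "x > 0" "y > 0"
    using xy by fastforce
  then show "f ((1 - t) *\<^sub>R x + t *\<^sub>R y) \<le> (1 - t) * f x + t * f y"
  proof cases
    case 4
    then have "0 < (1 - t) * x + t * y" using t by (simp add: add_pos_pos)
    then show ?thesis using convex_onD[OF g, of t x y] t 4 by (simp add: fg)
  qed (use t f0 scale[of t y] scale[of "1 - t" x] in auto)
qed simp

lemma convex_on_powr_nonneg:
  fixes a :: real
  assumes "1 \<le> a"
  shows "convex_on {0..} (\<lambda>x. x powr a)"
proof (rule convex_on_nonneg_extend[OF powr_convex[OF assms]])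
  fix t y :: real
  assume ty: "0 \<le> t" "t \<le> 1" "0 < y"
  have "t powr a \<le> t" using powr_mono'[of 1 a t] ty assms by simp
  then show "(t * y) powr a \<le> t * y powr a" using ty by (simp add: powr_mult mult_right_mono)
qed (use assms in auto)

lemma convex_on_xlogx: "convex_on {0..} xlogx"
proof (rule convex_on_nonneg_extend[of "\<lambda>x. x * ln x"])
  show "convex_on {0<..} (\<lambda>x::real. x * ln x)"
  proof (rule f''_ge0_imp_convex[where f' = "\<lambda>x. ln x + 1" and f'' = "\<lambda>x. 1 / x"])
    fix x :: real
    assume "x \<in> {0<..}"
    then show "DERIV (\<lambda>x. x * ln x) x :> ln x + 1" "DERIV (\<lambda>x. ln x + 1) x :> 1 / x" "0 \<le> 1 / x"
      by (auto intro!: derivative_eq_intros)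
  qed simp
  fix t y :: real
  assume ty: "0 \<le> t" "t \<le> 1" "0 < y"
  have "t * y * ln t \<le> 0" using ty by (cases "t = 0") (auto intro!: mult_nonneg_nonpos)
  then show "xlogx (t * y) \<le> t * xlogx y"
    using ty by (cases "t = 0") (simp_all add: xlogx_def ln_mult algebra_simps)
qed (simp_all add: xlogx_def)

lemma convex_on_sum_sub_probability:
  fixes f :: "real \<Rightarrow> real"
  assumes cvx: "convex_on {0..} f" and f0: "f 0 = 0" and "finite K"
    and p: "\<And>k. k \<in> K \<Longrightarrow> 0 \<le> p k" "sum p K \<le> 1"
    and c: "\<And>k. k \<in> K \<Longrightarrow> 0 \<le> c k"
  shows "f (\<Sum>k\<in>K. p k * c k) \<le> (\<Sum>k\<in>K. p k * f (c k))"
proof (cases "sum p K = 0")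
  case True
  then have "\<forall>k\<in>K. p k = 0" using sum_nonneg_eq_0_iff[OF \<open>finite K\<close>] p by blast
  then show ?thesis using f0 by simp
next
  case False
  define s where "s = sum p K"
  have s: "0 < s" "s \<le> 1" using False p sum_nonneg[of K p] by (force simp: s_def)+
  \<comment> \<open>Jensen for the normalised weights p / s, then convexity between 0 and their barycentre.\<close>
  define z where "z = (\<Sum>k\<in>K. (p k / s) * c k)"
  have "0 \<le> z" unfolding z_def using p c s by (auto intro!: sum_nonneg)
  have "f (s * z) \<le> s * f z"
    using convex_onD[OF cvx, of s 0 z] s \<open>0 \<le> z\<close> f0 by simp
  also have "f z \<le> (\<Sum>k\<in>K. (p k / s) * f (c k))"
    unfolding z_def using convex_on_sum[OF \<open>finite K\<close> _ cvx, of "\<lambda>k. p k / s" c] False p c s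
    by (fastforce simp: s_def sum_divide_distrib[symmetric])
  then have "s * f z \<le> s * (\<Sum>k\<in>K. (p k / s) * f (c k))" using s by simp
  also have "\<dots> = (\<Sum>k\<in>K. p k * f (c k))" using s by (simp add: sum_distrib_left)
  finally show ?thesis using s by (simp add: z_def sum_distrib_left)
qed

lemma sum_convex_le_doubly_substochastic:
  fixes f :: "real \<Rightarrow> real" and p :: "'x \<Rightarrow> 'k \<Rightarrow> real"
  assumes cvx: "convex_on {0..} f" and f0: "f 0 = 0" and "finite X" "finite K"
    and "\<And>x k. x \<in> X \<Longrightarrow> k \<in> K \<Longrightarrow> 0 \<le> p x k"
    and "\<And>x. x \<in> X \<Longrightarrow> (\<Sum>k\<in>K. p x k) \<le> 1"
    and col: "\<And>k. k \<in> K \<Longrightarrow> c k \<noteq> 0 \<Longrightarrow> (\<Sum>x\<in>X. p x k) = 1"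
    and "\<And>k. k \<in> K \<Longrightarrow> 0 \<le> c k"
  shows "(\<Sum>x\<in>X. f (\<Sum>k\<in>K. p x k * c k)) \<le> (\<Sum>k\<in>K. f (c k))"
proof -
  have "(\<Sum>x\<in>X. f (\<Sum>k\<in>K. p x k * c k)) \<le> (\<Sum>x\<in>X. \<Sum>k\<in>K. p x k * f (c k))"
    using assms by (intro sum_mono convex_on_sum_sub_probability) auto
  also have "\<dots> = (\<Sum>k\<in>K. (\<Sum>x\<in>X. p x k) * f (c k))"
    by (simp add: sum.swap[of _ X] sum_distrib_right)
  also have "\<dots> = (\<Sum>k\<in>K. f (c k))"
  proof (intro sum.cong refl)
    fix k
    assume "k \<in> K"
    then show "(\<Sum>x\<in>X. p x k) * f (c k) = f (c k)" using col[of k] f0 by (cases "c k = 0") auto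
  qed
  finally show ?thesis .
qed

section \<open>Mixtures of density matrices\<close>

lemma rank_one_le_diagonalized_bound:
  fixes U :: "real^'n^'n"
  assumes U: "orthogonal_matrix U" and c: "\<And>k. 0 \<le> c $ k" and "0 \<le> \<mu>"
    and le: "\<And>x. \<mu> * (v \<bullet> x)\<^sup>2 \<le> x \<bullet> ((U ** diag_mat c ** transpose U) *v x)"
  shows "\<mu> * (\<Sum>k\<in>UNIV. (v \<bullet> column k U)\<^sup>2 / c $ k) \<le> 1"
proof -
  \<comment> \<open>Test vector z = C^+ v for C = U diag c U^T; the junk value x / 0 = 0 makes the
    sums skip the kernel of C.\<close>
  define s where "s = (\<Sum>k\<in>UNIV. (v \<bullet> column k U)\<^sup>2 / c $ k)"
  define z where "z = (\<Sum>k\<in>UNIV. ((v \<bullet> column k U) / c $ k) *\<^sub>R column k U)"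
  have "0 \<le> s" unfolding s_def using c by (intro sum_nonneg) simp
  have "v \<bullet> z = s"
    by (simp add: s_def z_def inner_sum_right power2_eq_square)
  moreover have "z \<bullet> ((U ** diag_mat c ** transpose U) *v z) = s"
  proof -
    have "c $ k * (column k U \<bullet> z)\<^sup>2 = (v \<bullet> column k U)\<^sup>2 / c $ k" for k
      unfolding z_def inner_column_sum_columns[OF U] by (simp add: power2_eq_square)
    then show ?thesis by (simp add: quadratic_form_diagonalized s_def)
  qed
  ultimately have "\<mu> * s\<^sup>2 \<le> s" using le[of z] by simp
  then show ?thesis
    using \<open>0 \<le> s\<close> \<open>0 \<le> \<mu>\<close> unfolding s_def[symmetric]
    by (cases "s = 0") (auto simp: power2_eq_square mult.assoc[symmetric] mult_le_cancel_right)
qed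

lemma mixture_eigenvalues_doubly_substochastic:
  fixes \<rho> U :: "nat \<Rightarrow> real^'n^'n" and \<sigma> :: "nat \<Rightarrow> real^'n"
  assumes w0: "\<And>j. j < n \<Longrightarrow> 0 \<le> w j"
    and U: "\<And>j. j < n \<Longrightarrow> orthogonal_matrix (U j)"
    and \<rho>: "\<And>j. j < n \<Longrightarrow> \<rho> j = U j ** diag_mat (\<sigma> j) ** transpose (U j)"
    and \<sigma>0: "\<And>j i. j < n \<Longrightarrow> 0 \<le> \<sigma> j $ i"
    and V: "orthogonal_matrix V" and C: "(\<Sum>j<n. w j *\<^sub>R \<rho> j) = V ** diag_mat c ** transpose V"
  obtains p :: "nat \<times> 'n \<Rightarrow> 'n \<Rightarrow> real"
  where "\<And>j i k. j < n \<Longrightarrow> 0 \<le> p (j, i) k"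
    and "\<And>j i. j < n \<Longrightarrow> (\<Sum>k\<in>UNIV. p (j, i) k) \<le> 1"
    and "\<And>k. c $ k \<noteq> 0 \<Longrightarrow> (\<Sum>ji\<in>{..<n} \<times> UNIV. p ji k) = 1"
    and "\<And>j i. j < n \<Longrightarrow> (\<Sum>k\<in>UNIV. p (j, i) k * c $ k) = w j * \<sigma> j $ i"
    and "\<And>k. 0 \<le> c $ k"
proof -
  define q where "q j i x = w j * \<sigma> j $ i * (column i (U j) \<bullet> x)\<^sup>2" for j i x
  have q0: "0 \<le> q j i x" if "j < n" for j i x
    using w0[OF that] \<sigma>0[OF that] by (simp add: q_def)
  have quad: "x \<bullet> ((V ** diag_mat c ** transpose V) *v x) = (\<Sum>j<n. \<Sum>i\<in>UNIV. q j i x)" for x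
    unfolding C[symmetric] quadratic_form_scaleR_sum
    by (intro sum.cong refl) (simp add: \<rho> quadratic_form_diagonalized q_def sum_distrib_left mult.assoc)
  have q_le: "q j i x \<le> x \<bullet> ((V ** diag_mat c ** transpose V) *v x)" if "j < n" for j i x
  proof -
    have "q j i x \<le> (\<Sum>i\<in>UNIV. q j i x)" using q0[OF that] by (intro member_le_sum) auto
    also have "\<dots> \<le> (\<Sum>j<n. \<Sum>i\<in>UNIV. q j i x)"
      using that q0 by (intro member_le_sum[of j "{..<n}" "\<lambda>j. \<Sum>i\<in>UNIV. q j i x"] sum_nonneg) auto
    finally show ?thesis by (simp add: quad)
  qed
  have c_eq: "c $ k = column k V \<bullet> ((V ** diag_mat c ** transpose V) *v column k V)" for k
    by (simp add: diagonalized_mult_column[OF V] orthogonal_matrix_column_inner[OF V])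
  have c0: "0 \<le> c $ k" for k
    unfolding c_eq quad using q0 by (auto intro!: sum_nonneg)
  \<comment> \<open>The share of the eigenvalue c k of the mixture coming from the eigenvalue \<sigma> j $ i
    of \<rho> j; q j i vanishes on eigenvectors with c k = 0, where division gives 0.\<close>
  define p where "p ji k = q (fst ji) (snd ji) (column k V) / c $ k" for ji k
  have col: "(\<Sum>ji\<in>{..<n} \<times> UNIV. p ji k) = 1" if "c $ k \<noteq> 0" for k
  proof -
    have "(\<Sum>ji\<in>{..<n} \<times> UNIV. p ji k) = (\<Sum>j<n. \<Sum>i\<in>UNIV. p (j, i) k)"
      by (simp add: sum.cartesian_product)
    also have "\<dots> = 1"
      using that c_eq[of k] by (simp add: p_def quad sum_divide_distrib[symmetric])
    finally show ?thesis .
  qed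
  have row: "(\<Sum>k\<in>UNIV. p (j, i) k) \<le> 1" if "j < n" for j i
  proof -
    have "w j * \<sigma> j $ i * (\<Sum>k\<in>UNIV. (column i (U j) \<bullet> column k V)\<^sup>2 / c $ k) \<le> 1"
      using w0[OF that] \<sigma>0[OF that] c0 q_le[OF that, of i] V
      by (intro rank_one_le_diagonalized_bound) (auto simp: q_def)
    then show ?thesis by (simp add: p_def q_def sum_distrib_left inner_commute)
  qed
  have mass: "(\<Sum>k\<in>UNIV. p (j, i) k * c $ k) = w j * \<sigma> j $ i" if "j < n" for j i
  proof -
    have "p (j, i) k * c $ k = q j i (column k V)" for k
      using q0[OF that, of i "column k V"] q_le[OF that, of i "column k V"] c_eq[of k]
      by (auto simp: p_def)
    moreover have "(\<Sum>k\<in>UNIV. (column i (U j) \<bullet> column k V)\<^sup>2) = 1"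
      using sum_column_inner_squared[OF V, of "column i (U j)"]
        orthogonal_matrix_column_inner[OF U[OF that], of i i] by (simp add: inner_commute)
    ultimately show ?thesis by (simp add: q_def sum_distrib_left[symmetric])
  qed
  have "0 \<le> p (j, i) k" if "j < n" for j i k
    using q0[OF that] c0 by (simp add: p_def)
  then show thesis using row col mass c0 by (rule that)
qed

lemma sum_convex_eigenvalues_mixture_le:
  fixes \<rho> U :: "nat \<Rightarrow> real^'n^'n" and \<sigma> :: "nat \<Rightarrow> real^'n"
  assumes cvx: "convex_on {0..} f" and f0: "f 0 = 0"
    and w0: "\<And>j. j < n \<Longrightarrow> 0 \<le> w j"
    and U: "\<And>j. j < n \<Longrightarrow> orthogonal_matrix (U j)"
    and \<rho>: "\<And>j. j < n \<Longrightarrow> \<rho> j = U j ** diag_mat (\<sigma> j) ** transpose (U j)"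
    and \<sigma>0: "\<And>j i. j < n \<Longrightarrow> 0 \<le> \<sigma> j $ i"
    and V: "orthogonal_matrix V" and C: "(\<Sum>j<n. w j *\<^sub>R \<rho> j) = V ** diag_mat c ** transpose V"
  shows "(\<Sum>j<n. \<Sum>i\<in>UNIV. f (w j * \<sigma> j $ i)) \<le> (\<Sum>k\<in>UNIV. f (c $ k))"
proof (rule mixture_eigenvalues_doubly_substochastic[OF w0 U \<rho> \<sigma>0 V C])
  fix p :: "nat \<times> 'n \<Rightarrow> 'n \<Rightarrow> real"
  assume p0: "\<And>j i k. j < n \<Longrightarrow> 0 \<le> p (j, i) k"
    and row: "\<And>j i. j < n \<Longrightarrow> (\<Sum>k\<in>UNIV. p (j, i) k) \<le> 1"
    and col: "\<And>k. c $ k \<noteq> 0 \<Longrightarrow> (\<Sum>ji\<in>{..<n} \<times> UNIV. p ji k) = 1"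
    and mass: "\<And>j i. j < n \<Longrightarrow> (\<Sum>k\<in>UNIV. p (j, i) k * c $ k) = w j * \<sigma> j $ i"
    and c0: "\<And>k. 0 \<le> c $ k"
  have "(\<Sum>j<n. \<Sum>i\<in>UNIV. f (w j * \<sigma> j $ i))
      = (\<Sum>j<n. \<Sum>i\<in>UNIV. f (\<Sum>k\<in>UNIV. p (j, i) k * c $ k))"
    by (simp add: mass)
  also have "\<dots> = (\<Sum>ji\<in>{..<n} \<times> UNIV. f (\<Sum>k\<in>UNIV. p ji k * c $ k))"
    by (simp add: sum.cartesian_product)
  also have "\<dots> \<le> (\<Sum>k\<in>UNIV. f (c $ k))"
    using p0 row col c0 by (intro sum_convex_le_doubly_substochastic[OF cvx f0]) auto
  finally show ?thesis .
qed

lemma density_matrix_spectrum: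
  fixes \<rho> :: "real^'n^'n"
  assumes "density_matrix \<rho>"
  obtains U \<sigma> where "orthogonal_matrix U" "\<rho> = U ** diag_mat \<sigma> ** transpose U"
    "\<And>i. 0 \<le> \<sigma> $ i" "(\<Sum>i\<in>UNIV. \<sigma> $ i) = 1" "\<And>f. mtrace (mat_fun f \<rho>) = (\<Sum>i\<in>UNIV. f (\<sigma> $ i))"
proof -
  have sym: "transpose \<rho> = \<rho>" and psd: "\<And>x. 0 \<le> x \<bullet> (\<rho> *v x)" and tr: "mtrace \<rho> = 1"
    using assms by (auto simp: density_matrix_def)
  obtain U \<sigma> where U: "orthogonal_matrix U" and \<rho>: "\<rho> = U ** diag_mat \<sigma> ** transpose U"
    and tr_f: "\<And>f. mtrace (mat_fun f \<rho>) = (\<Sum>i\<in>UNIV. f (\<sigma> $ i))"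
    by (rule symmetric_matrix_mtrace_mat_fun[OF sym]) blast
  have "\<sigma> $ i = column i U \<bullet> (\<rho> *v column i U)" for i
    by (simp add: \<rho> diagonalized_mult_column[OF U] orthogonal_matrix_column_inner[OF U])
  then have "0 \<le> \<sigma> $ i" for i using psd by simp
  moreover have "(\<Sum>i\<in>UNIV. \<sigma> $ i) = 1" using tr by (simp add: \<rho> mtrace_diagonalized[OF U])
  ultimately show thesis using that U \<rho> tr_f by blast
qed

lemma density_mixture_spectra:
  fixes \<rho> :: "nat \<Rightarrow> real^'n^'n"
  assumes w0: "\<And>j. j < n \<Longrightarrow> 0 \<le> w j" and \<rho>: "\<And>j. j < n \<Longrightarrow> density_matrix (\<rho> j)"
  obtains \<sigma> :: "nat \<Rightarrow> real^'n" where "\<And>j i. j < n \<Longrightarrow> 0 \<le> \<sigma> j $ i"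
    "\<And>j. j < n \<Longrightarrow> (\<Sum>i\<in>UNIV. \<sigma> j $ i) = 1"
    "\<And>f j. j < n \<Longrightarrow> mtrace (mat_fun f (\<rho> j)) = (\<Sum>i\<in>UNIV. f (\<sigma> j $ i))"
    "\<And>f. convex_on {0..} f \<Longrightarrow> f 0 = 0 \<Longrightarrow>
      (\<Sum>j<n. \<Sum>i\<in>UNIV. f (w j * \<sigma> j $ i)) \<le> mtrace (mat_fun f (\<Sum>j<n. w j *\<^sub>R \<rho> j))"
proof -
  have "\<exists>U \<sigma>. j < n \<longrightarrow> orthogonal_matrix U \<and> \<rho> j = U ** diag_mat \<sigma> ** transpose U \<and>
      (\<forall>i. 0 \<le> \<sigma> $ i) \<and> (\<Sum>i\<in>UNIV. \<sigma> $ i) = 1 \<and>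
      (\<forall>f. mtrace (mat_fun f (\<rho> j)) = (\<Sum>i\<in>UNIV. f (\<sigma> $ i)))"
    for j
    by (cases "j < n") (auto elim!: density_matrix_spectrum[OF \<rho>])
  then obtain U \<sigma> where U: "\<And>j. j < n \<Longrightarrow> orthogonal_matrix (U j)"
    and \<rho>_eq: "\<And>j. j < n \<Longrightarrow> \<rho> j = U j ** diag_mat (\<sigma> j) ** transpose (U j)"
    and \<sigma>0: "\<And>j i. j < n \<Longrightarrow> 0 \<le> \<sigma> j $ i" and \<sigma>1: "\<And>j. j < n \<Longrightarrow> (\<Sum>i\<in>UNIV. \<sigma> j $ i) = 1"
    and tr: "\<And>f j. j < n \<Longrightarrow> mtrace (mat_fun f (\<rho> j)) = (\<Sum>i\<in>UNIV. f (\<sigma> j $ i))"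
    by metis
  have "transpose (\<Sum>j<n. w j *\<^sub>R \<rho> j) = (\<Sum>j<n. w j *\<^sub>R \<rho> j)"
    using \<rho> by (simp add: transpose_sum transpose_scalar density_matrix_def)
  then obtain V c where V: "orthogonal_matrix V" "(\<Sum>j<n. w j *\<^sub>R \<rho> j) = V ** diag_mat c ** transpose V"
    and trC: "\<And>f. mtrace (mat_fun f (\<Sum>j<n. w j *\<^sub>R \<rho> j)) = (\<Sum>k\<in>UNIV. f (c $ k))"
    by (rule symmetric_matrix_mtrace_mat_fun) blast
  show thesis
    using sum_convex_eigenvalues_mixture_le[OF _ _ w0 U \<rho>_eq \<sigma>0 V] trC
    by (intro that[OF \<sigma>0 \<sigma>1 tr]) simp_all
qed

lemma sum_xlogx_mult:
  assumes "0 \<le> a" "\<And>i. i \<in> I \<Longrightarrow> 0 \<le> b i" "sum b I = 1"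
  shows "(\<Sum>i\<in>I. xlogx (a * b i)) = xlogx a + a * (\<Sum>i\<in>I. xlogx (b i))"
proof -
  have "xlogx (a * b i) = b i * xlogx a + a * xlogx (b i)" if "i \<in> I" for i
    using assms(1) assms(2)[OF that]
    by (cases "a = 0 \<or> b i = 0") (auto simp: xlogx_def ln_mult algebra_simps)
  then show ?thesis
    using assms(3) by (simp add: sum.distrib sum_distrib_left[symmetric] sum_distrib_right[symmetric])
qed

lemma sum_powr_le_one:
  fixes x :: "'i \<Rightarrow> real"
  assumes "1 \<le> a" "\<And>i. i \<in> I \<Longrightarrow> 0 \<le> x i" "sum x I = 1"
  shows "(\<Sum>i\<in>I. x i powr a) \<le> 1"
proof -
  have "finite I" using assms(3) sum.infinite by fastforce
  have "x i powr a \<le> x i" if "i \<in> I" for i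
    using powr_mono'[of 1 a "x i"] assms member_le_sum[OF that, of x] \<open>finite I\<close> that by simp
  then have "(\<Sum>i\<in>I. x i powr a) \<le> sum x I" by (rule sum_mono)
  with assms(3) show ?thesis by simp
qed

lemma tsallis_mixture_le:
  fixes w T :: "'j \<Rightarrow> real"
  assumes "1 < \<alpha>" and w: "\<And>j. j \<in> J \<Longrightarrow> 0 \<le> w j" "sum w J = 1" and T: "\<And>j. j \<in> J \<Longrightarrow> T j \<le> 1"
    and le: "(\<Sum>j\<in>J. w j powr \<alpha> * T j) \<le> S"
  shows "(S - 1) / (1 - \<alpha>) - (\<Sum>j\<in>J. w j * ((T j - 1) / (1 - \<alpha>)))
    \<le> ((\<Sum>j\<in>J. w j powr \<alpha>) - 1) / (1 - \<alpha>)"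
proof -
  have "finite J" using w(2) sum.infinite by fastforce
  have "(w j - w j powr \<alpha>) * T j \<le> w j - w j powr \<alpha>" if "j \<in> J" for j
  proof -
    have "w j \<le> 1" using member_le_sum[OF that, of w] w \<open>finite J\<close> by simp
    then have "w j powr \<alpha> \<le> w j" using powr_mono'[of 1 \<alpha> "w j"] assms(1) w(1)[OF that] by simp
    then show ?thesis using T[OF that] by (simp add: mult_left_le)
  qed
  then have "(\<Sum>j\<in>J. (w j - w j powr \<alpha>) * T j) \<le> (\<Sum>j\<in>J. w j - w j powr \<alpha>)"
    by (rule sum_mono)
  then have "(\<Sum>j\<in>J. w j * T j) + (\<Sum>j\<in>J. w j powr \<alpha>) \<le> S + 1"
    using le w(2) by (simp add: left_diff_distrib sum_subtractf)
  moreover have "(S - 1) / (1 - \<alpha>) - (\<Sum>j\<in>J. w j * ((T j - 1) / (1 - \<alpha>)))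
      = (S - (\<Sum>j\<in>J. w j * T j)) / (1 - \<alpha>)"
    using w(2) assms(1)
    by (simp add: sum_divide_distrib[symmetric] diff_divide_distrib right_diff_distrib sum_subtractf)
  ultimately show ?thesis using assms(1) by (simp add: divide_right_mono_neg)
qed

theorem proposition4:
  fixes \<alpha> :: real and n :: nat and w :: "nat \<Rightarrow> real" and \<rho> :: "nat \<Rightarrow> real^'m^'m"
  assumes "1 \<le> \<alpha>" "\<alpha> \<le> 2" "n \<ge> 1"
    and "\<And>j. j < n \<Longrightarrow> 0 \<le> w j" "(\<Sum>j<n. w j) = 1"
    and "\<And>j. j < n \<Longrightarrow> density_matrix (\<rho> j)"
  shows "qjt_div \<alpha> n w \<rho> \<le> ctsallis \<alpha> n w"
proof (rule density_mixture_spectra[where n = n and w = w and \<rho> = \<rho>, OF assms(4,6)])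
  fix \<sigma> :: "nat \<Rightarrow> real^'m"
  assume \<sigma>0: "\<And>j i. j < n \<Longrightarrow> 0 \<le> \<sigma> j $ i"
    and \<sigma>1: "\<And>j. j < n \<Longrightarrow> (\<Sum>i\<in>UNIV. \<sigma> j $ i) = 1"
    and tr: "\<And>f j. j < n \<Longrightarrow> mtrace (mat_fun f (\<rho> j)) = (\<Sum>i\<in>UNIV. f (\<sigma> j $ i))"
    and mix: "\<And>f. convex_on {0..} f \<Longrightarrow> f 0 = 0 \<Longrightarrow>
      (\<Sum>j<n. \<Sum>i\<in>UNIV. f (w j * \<sigma> j $ i)) \<le> mtrace (mat_fun f (\<Sum>j<n. w j *\<^sub>R \<rho> j))"
  show ?thesis
  proof (cases "\<alpha> = 1")
    case True
    have "(\<Sum>j<n. xlogx (w j) + w j * (\<Sum>i\<in>UNIV. xlogx (\<sigma> j $ i)))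
        \<le> mtrace (mat_fun xlogx (\<Sum>j<n. w j *\<^sub>R \<rho> j))"
      using mix[OF convex_on_xlogx] \<sigma>0 \<sigma>1 assms(4) by (simp add: xlogx_def[of 0] sum_xlogx_mult)
    then show ?thesis
      using True by (simp add: qjt_div_def qtsallis_def ctsallis_def tr sum.distrib sum_negf)
  next
    case False
    have "(\<Sum>j<n. w j powr \<alpha> * (\<Sum>i\<in>UNIV. \<sigma> j $ i powr \<alpha>))
        \<le> mtrace (mat_fun (\<lambda>x. x powr \<alpha>) (\<Sum>j<n. w j *\<^sub>R \<rho> j))"
      using mix[OF convex_on_powr_nonneg[OF assms(1)]] \<sigma>0 assms(1,4)
      by (simp add: powr_mult sum_distrib_left)
    moreover have "(\<Sum>i\<in>UNIV. \<sigma> j $ i powr \<alpha>) \<le> 1" if "j \<in> {..<n}" for j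
      using that by (intro sum_powr_le_one[OF assms(1)]) (simp_all add: \<sigma>0 \<sigma>1)
    moreover have "1 < \<alpha>" "\<And>j. j \<in> {..<n} \<Longrightarrow> 0 \<le> w j" using False assms(1,4) by auto
    ultimately show ?thesis
      using False tsallis_mixture_le[where J = "{..<n}", OF _ _ assms(5)]
      by (simp add: qjt_div_def qtsallis_def ctsallis_def tr)
  qed
qed

end
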